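(* Let $H$ be a monoid satisfying the ascending chain condition on principal ideals. Then the following hold: $1r\Rightarrow 0r$, $2r\Rightarrow 1r$, $2r\Leftrightarrow 3r$, $3r\Leftrightarrow 6r$, $6r\Leftrightarrow 5r$, $5r\Rightarrow 4r$, $5r\Rightarrow 5'r$, $4r\Rightarrow 4'r$, $1r\Rightarrow 1s$, $2r\Rightarrow 2s$, $5r\Rightarrow 5s$, $4r\Rightarrow 4s$, $2s\Rightarrow 5s$, $5's\Rightarrow 2s$.
   Context: A monoid means a commutative cancellative monoid (written multiplicatively); $H^{\ast}$ is its unit group, $\mathbb{N}=\{1,2,\dots\}$, $\mathbb{N}_0=\{0,1,2,\dots\}$. ACCP: every ascending chain of principal ideals of $H$ stabilizes. Elements are relatively prime ($a\perp b$) if all their common divisors are units. $\mathrm{Sqf}\,H$: elements not of the form $b^2c$ with $b\notin H^{\ast}$. $\mathrm{Gpr}\,H$: elements $r$ such that $r\mid b^n$ ($n\in\mathbb{N}$) implies $r\mid b$. Let $S$ stand for $\mathrm{Sqf}\,H$ (suffix s) or $\mathrm{Gpr}\,H$ (suffix r). For every $a\in H$: (0) there are $n\in\mathbb{N}$, $s_1,\dots,s_n\in S$ with $a=s_1\cdots s_n$; (1) there are $n\in\mathbb{N}$, $s_1,\dots,s_n\in S$ with $s_i\perp s_j$ for $i\ne j$ and $a=s_1s_2^2\cdots s_n^n$; (2) there are $n\in\mathbb{N}$, $s_1,\dots,s_n\in S$ with $s_i\mid s_{i+1}$ ($i<n$) and $a=s_1\cdots s_n$; (3) there are $n\in\mathbb{N}_0$,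 $s_0,\dots,s_n\in S$ with $a=s_0s_1^2s_2^{2^2}\cdots s_n^{2^n}$; (4) there are $b\in H$, $c\in S$ with $b\perp c$, $a=bc$, and some $d\in S$ with $d^2\mid b$ and $b\mid d^n$ for some $n\in\mathbb{N}$; (4') there are $b\in H$, $c\in S$ with $b\perp c$, $a=bc$, and for every $d\in S$, $d\mid b$ implies $d^2\mid b$; (5) there are $b\in H$, $c\in S$ with $a=bc$ and $a\mid c^n$ for some $n\in\mathbb{N}$; (5') there are $b\in H$, $c\in S$ with $a=bc$ and for every $d\in S$, $d\mid a$ implies $d\mid c$; (6) there are $b\in H$, $c\in S$ with $a=b^2c$. Condition $ks$ (resp. $kr$) is $(k)$ with $S=\mathrm{Sqf}\,H$ (resp. $S=\mathrm{Gpr}\,H$). *)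

theory Defs
  imports Main
begin

text \<open>A monoid H is modelled as a type of class comm_monoid_mult together with an
  explicit cancellativity hypothesis. Divisibility is the library dvd.\<close>

definition cancellative :: "'a::comm_monoid_mult itself \<Rightarrow> bool" where
  "cancellative _ \<longleftrightarrow> (\<forall>a b c::'a. a * b = a * c \<longrightarrow> b = c)"

definition unitH :: "'a::comm_monoid_mult \<Rightarrow> bool" where
  "unitH a \<longleftrightarrow> (\<exists>b. a * b = 1)"

text \<open>ACCP: every ascending chain f 0 H \<subseteq> f 1 H \<subseteq> ... of principal ideals stabilizes.\<close>
definition ACCP :: "'a::comm_monoid_mult itself \<Rightarrow> bool" where
  "ACCP _ \<longleftrightarrow> (\<forall>f::nat \<Rightarrow> 'a. (\<forall>n. f (Suc n) dvd f n) \<longrightarrow> (\<exists>N. \<forall>n\<ge>N. f N dvd f n))"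

definition relprime :: "'a::comm_monoid_mult \<Rightarrow> 'a \<Rightarrow> bool" where
  "relprime a b \<longleftrightarrow> (\<forall>d. d dvd a \<and> d dvd b \<longrightarrow> unitH d)"

definition Sqf :: "'a::comm_monoid_mult set" where
  "Sqf = {a. \<not> (\<exists>b c. a = b^2 * c \<and> \<not> unitH b)}"

definition Gpr :: "'a::comm_monoid_mult set" where
  "Gpr = {r. \<forall>b n. n \<ge> 1 \<longrightarrow> r dvd b ^ n \<longrightarrow> r dvd b}"

definition cond0 :: "'a::comm_monoid_mult set \<Rightarrow> 'a \<Rightarrow> bool" where
  "cond0 S a \<longleftrightarrow> (\<exists>n\<ge>1. \<exists>s::nat \<Rightarrow> 'a. (\<forall>i\<in>{1..n}. s i \<in> S) \<and> a = (\<Prod>i=1..n. s i))"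

definition cond1 :: "'a::comm_monoid_mult set \<Rightarrow> 'a \<Rightarrow> bool" where
  "cond1 S a \<longleftrightarrow> (\<exists>n\<ge>1. \<exists>s::nat \<Rightarrow> 'a. (\<forall>i\<in>{1..n}. s i \<in> S)
      \<and> (\<forall>i\<in>{1..n}. \<forall>j\<in>{1..n}. i \<noteq> j \<longrightarrow> relprime (s i) (s j))
      \<and> a = (\<Prod>i=1..n. s i ^ i))"

definition cond2 :: "'a::comm_monoid_mult set \<Rightarrow> 'a \<Rightarrow> bool" where
  "cond2 S a \<longleftrightarrow> (\<exists>n\<ge>1. \<exists>s::nat \<Rightarrow> 'a. (\<forall>i\<in>{1..n}. s i \<in> S)
      \<and> (\<forall>i. 1 \<le> i \<and> i < n \<longrightarrow> s i dvd s (Suc i))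
      \<and> a = (\<Prod>i=1..n. s i))"

definition cond3 :: "'a::comm_monoid_mult set \<Rightarrow> 'a \<Rightarrow> bool" where
  "cond3 S a \<longleftrightarrow> (\<exists>n::nat. \<exists>s::nat \<Rightarrow> 'a. (\<forall>i\<in>{0..n}. s i \<in> S)
      \<and> a = (\<Prod>i=0..n. s i ^ (2 ^ i)))"

definition cond4 :: "'a::comm_monoid_mult set \<Rightarrow> 'a \<Rightarrow> bool" where
  "cond4 S a \<longleftrightarrow> (\<exists>b c. c \<in> S \<and> relprime b c \<and> a = b * c
      \<and> (\<exists>d\<in>S. d^2 dvd b \<and> (\<exists>n\<ge>1. b dvd d ^ n)))"

definition cond4' :: "'a::comm_monoid_mult set \<Rightarrow> 'a \<Rightarrow> bool" where
  "cond4' S a \<longleftrightarrow> (\<exists>b c. c \<in> S \<and> relprime b c \<and> a = b * c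
      \<and> (\<forall>d\<in>S. d dvd b \<longrightarrow> d^2 dvd b))"

definition cond5 :: "'a::comm_monoid_mult set \<Rightarrow> 'a \<Rightarrow> bool" where
  "cond5 S a \<longleftrightarrow> (\<exists>b c. c \<in> S \<and> a = b * c \<and> (\<exists>n\<ge>1. a dvd c ^ n))"

definition cond5' :: "'a::comm_monoid_mult set \<Rightarrow> 'a \<Rightarrow> bool" where
  "cond5' S a \<longleftrightarrow> (\<exists>b c. c \<in> S \<and> a = b * c \<and> (\<forall>d\<in>S. d dvd a \<longrightarrow> d dvd c))"

definition cond6 :: "'a::comm_monoid_mult set \<Rightarrow> 'a \<Rightarrow> bool" where
  "cond6 S a \<longleftrightarrow> (\<exists>b c. c \<in> S \<and> a = b^2 * c)"

end

(*
  By cancellativity, a = b c with c a nonunit makes b a strict divisor of a, so ACCP yields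
  well-founded induction along such factorizations. Every implication that needs ACCP is proved
  this way: 6 => 3 and 6 => 5 peel off a = b^2 c, and 5' => 2 appends c to a divisor chain of b,
  which only needs that S contains the units and that every nonunit has a nonunit divisor in S
  (for Gpr this comes from 5, for Sqf from ACCP again).
  On the Gpr side, 5 yields a = s_1 s_2^2 ... s_n^n with s_1 ... s_n in Gpr, and this gives
  1, 4 and 6, because Gpr is closed under divisors and x y in Gpr forces x and y to be coprime.
  The latter also gives Gpr \<subseteq> Sqf, which transfers 1, 2, 4 and 5 to Sqf.
*)
theory Submission
  imports Defs
begin

text \<open>The library states the next three facts only for \<open>comm_semiring_1\<close>.\<close>

lemma prod_power_distrib_comm_monoid:
  fixes f :: "'b \<Rightarrow> 'a::comm_monoid_mult"
  shows "prod f A ^ n = (\<Prod>x\<in>A. f x ^ n)"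
  by (induction A rule: infinite_finite_induct) (auto simp: power_mult_distrib)

lemma le_imp_power_dvd_comm_monoid:
  fixes a :: "'a::comm_monoid_mult"
  assumes "m \<le> n"
  shows "a ^ m dvd a ^ n"
proof
  show "a ^ n = a ^ m * a ^ (n - m)" using assms by (simp flip: power_add)
qed

lemma dvd_power_same_comm_monoid:
  fixes x :: "'a::comm_monoid_mult"
  shows "x dvd y \<Longrightarrow> x ^ n dvd y ^ n"
  by (induction n) (simp_all add: mult_dvd_mono)

lemma unit_power2_mult_dvd:
  fixes b :: "'a::comm_monoid_mult"
  assumes "b dvd 1"
  shows "b\<^sup>2 * c dvd c"
  using mult_dvd_mono[OF dvd_power_same_comm_monoid[OF assms, of 2] dvd_refl[of c]] by simp

lemma prod_list_concat: "prod_list (concat xss) = prod_list (map prod_list xss)"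
  by (induction xss) simp_all

lemma prod_atLeast1_Suc_shift:
  fixes g :: "nat \<Rightarrow> 'a::comm_monoid_mult"
  shows "(\<Prod>i=1..Suc m. g i) = g 1 * (\<Prod>i=1..m. g (Suc i))"
proof -
  have "(\<Prod>i=1..Suc m. g i) = g 1 * (\<Prod>i=Suc 1..Suc m. g i)"
    by (rule prod.atLeast_Suc_atMost) simp
  then show ?thesis by (simp only: prod.shift_bounds_cl_Suc_ivl)
qed

lemma prod_power2_Suc_shift:
  fixes s :: "nat \<Rightarrow> 'a::comm_monoid_mult"
  shows "(\<Prod>i=0..Suc n. s i ^ 2 ^ i) = (\<Prod>i=0..n. s (Suc i) ^ 2 ^ i)\<^sup>2 * s 0"
proof -
  have "(\<Prod>i=0..Suc n. s i ^ 2 ^ i) = s 0 * (\<Prod>i=0..n. s (Suc i) ^ 2 ^ Suc i)"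
    unfolding prod.atLeast0_atMost_Suc_shift by simp
  also have "(\<Prod>i=0..n. s (Suc i) ^ 2 ^ Suc i) = (\<Prod>i=0..n. s (Suc i) ^ 2 ^ i)\<^sup>2"
    by (simp only: prod_power_distrib_comm_monoid power_Suc2 power_mult)
  finally show ?thesis by (simp add: ac_simps)
qed

lemma unitH_iff_dvd_one: "unitH (a::'a::comm_monoid_mult) \<longleftrightarrow> a dvd 1"
  unfolding unitH_def dvd_def by metis

lemma cancellativeD:
  assumes "cancellative TYPE('a::comm_monoid_mult)" and "(a::'a) * b = a * c"
  shows "b = c"
  using assms unfolding cancellative_def by blast

lemma dvd_mult_cancel_right:
  assumes "cancellative TYPE('a::comm_monoid_mult)" and "(x::'a) * q dvd y * q"
  shows "x dvd y"
proof -
  from assms(2) obtain k where "y * q = x * q * k" by (elim dvdE)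
  then have "q * y = q * (x * k)" by (simp add: ac_simps)
  then have "y = x * k" by (rule cancellativeD[OF assms(1)])
  then show ?thesis by simp
qed

lemma not_mult_nonunit_dvd:
  assumes "cancellative TYPE('a::comm_monoid_mult)" and "\<not> (c::'a) dvd 1"
  shows "\<not> b * c dvd b"
proof
  assume "b * c dvd b"
  then obtain k where "b = b * c * k" by (elim dvdE)
  then have "b * 1 = b * (c * k)" by (simp add: ac_simps)
  then have "1 = c * k" by (rule cancellativeD[OF assms(1)])
  then show False using assms(2) by (metis dvdI)
qed

lemma ACCP_wf_strict_dvd:
  assumes "ACCP TYPE('a::comm_monoid_mult)"
  shows "wf {(x::'a, y). x dvd y \<and> \<not> y dvd x}"
proof (unfold wf_iff_no_infinite_down_chain, rule notI)
  assume "\<exists>f. \<forall>i. (f (Suc i), f i) \<in> {(x::'a, y). x dvd y \<and> \<not> y dvd x}"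
  then obtain f :: "nat \<Rightarrow> 'a" where f: "\<And>i. f (Suc i) dvd f i \<and> \<not> f i dvd f (Suc i)"
    by auto
  then obtain N where "\<forall>n\<ge>N. f N dvd f n" using assms unfolding ACCP_def by blast
  then show False using f[of N] by auto
qed

lemma ACCP_nonunit_factor_induct:
  assumes "cancellative TYPE('a::comm_monoid_mult)" and "ACCP TYPE('a)"
    and step: "\<And>a::'a. (\<And>b c. a = b * c \<Longrightarrow> \<not> c dvd 1 \<Longrightarrow> P b) \<Longrightarrow> P a"
  shows "P a"
  using ACCP_wf_strict_dvd[OF assms(2)]
proof (induction a rule: wf_induct_rule)
  case (less a)
  show ?case
  proof (rule step)
    fix b c assume "a = b * c" "\<not> c dvd 1"
    then have "b dvd a \<and> \<not> a dvd b" using not_mult_nonunit_dvd[OF assms(1)] by simp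
    then show "P b" by (intro less) simp
  qed
qed

lemma GprD: "(r::'a::comm_monoid_mult) \<in> Gpr \<Longrightarrow> n \<ge> 1 \<Longrightarrow> r dvd b ^ n \<Longrightarrow> r dvd b"
  unfolding Gpr_def by blast

lemma unit_in_Gpr: "(u::'a::comm_monoid_mult) dvd 1 \<Longrightarrow> u \<in> Gpr"
  unfolding Gpr_def using dvd_trans one_dvd by blast

lemma Gpr_dvd_closed:
  assumes "cancellative TYPE('a::comm_monoid_mult)" and "(r::'a) \<in> Gpr" and "x dvd r"
  shows "x \<in> Gpr"
proof (unfold Gpr_def, intro CollectI allI impI)
  fix b :: 'a and n :: nat
  assume n: "n \<ge> 1" and "x dvd b ^ n"
  from assms(3) obtain q where r: "r = x * q" by (elim dvdE)
  have "q dvd q ^ n" using n by (cases n) auto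
  with \<open>x dvd b ^ n\<close> have "x * q dvd b ^ n * q ^ n" by (rule mult_dvd_mono)
  then have "r dvd (b * q) ^ n" by (simp add: r power_mult_distrib)
  then have "x * q dvd b * q" using GprD[OF assms(2) n] r by blast
  then show "x dvd b" by (rule dvd_mult_cancel_right[OF assms(1)])
qed

text \<open>If \<open>r = x y\<close> and \<open>d\<close> divides \<open>x\<close> and \<open>y\<close>, then \<open>r\<close> divides
  \<open>(r/d)\<^sup>2\<close>, hence \<open>r/d\<close>; cancelling \<open>r/d\<close> makes \<open>d\<close> a unit.\<close>
lemma relprime_if_mult_Gpr:
  assumes "cancellative TYPE('a::comm_monoid_mult)" and "(x::'a) * y \<in> Gpr"
  shows "relprime x y"
  unfolding relprime_def unitH_iff_dvd_one
proof (intro allI impI)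
  fix d assume "d dvd x \<and> d dvd y"
  then obtain x' y' where x: "x = d * x'" and y: "y = d * y'" unfolding dvd_def by blast
  have "(d * x' * y') ^ 2 = x * y * (x' * y')"
    by (simp add: x y power2_eq_square ac_simps)
  then have "x * y dvd (d * x' * y') ^ 2" by (rule dvdI)
  then have "x * y dvd d * x' * y'" by (rule GprD[OF assms(2), rotated]) simp
  then obtain k where k: "d * x' * y' = x * y * k" by (elim dvdE)
  have "(d * x' * y') * 1 = x * y * k" by (simp add: k)
  also have "\<dots> = (d * x' * y') * (d * k)" by (simp add: x y ac_simps)
  finally have "1 = d * k" by (rule cancellativeD[OF assms(1)])
  then show "d dvd 1" by (rule dvdI)
qed

lemma Gpr_subset_Sqf:
  assumes "cancellative TYPE('a::comm_monoid_mult)"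
  shows "(Gpr::'a set) \<subseteq> Sqf"
proof
  fix r :: 'a assume r: "r \<in> Gpr"
  show "r \<in> Sqf" unfolding Sqf_def unitH_iff_dvd_one
  proof (clarify)
    fix b c assume "r = b^2 * c" and "\<not> b dvd 1"
    then have "b * (b * c) \<in> Gpr" using r by (simp add: power2_eq_square ac_simps)
    then have "relprime b (b * c)" by (rule relprime_if_mult_Gpr[OF assms])
    then show False using \<open>\<not> b dvd 1\<close> by (simp add: relprime_def unitH_iff_dvd_one)
  qed
qed

lemma unit_in_Sqf:
  assumes "(u::'a::comm_monoid_mult) dvd 1"
  shows "u \<in> Sqf"
proof -
  have "b dvd 1" if "u = b^2 * c" for b c
  proof -
    from that have "b dvd u" by (simp add: power2_eq_square mult.assoc)
    then show ?thesis using assms by (rule dvd_trans)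
  qed
  then show ?thesis unfolding Sqf_def unitH_iff_dvd_one by blast
qed

lemma nonunit_imp_nonunit_Sqf_dvd:
  assumes "cancellative TYPE('a::comm_monoid_mult)" and "ACCP TYPE('a)"
  shows "\<not> (a::'a) dvd 1 \<Longrightarrow> \<exists>d\<in>Sqf. d dvd a \<and> \<not> d dvd 1"
proof (induction a rule: ACCP_nonunit_factor_induct[OF assms, case_names step])
  case (step a)
  show ?case
  proof (cases "a \<in> Sqf")
    case True
    then show ?thesis using step.prems dvd_refl by blast
  next
    case False
    then obtain b c where a: "a = b^2 * c" and b: "\<not> b dvd 1"
      unfolding Sqf_def unitH_iff_dvd_one by blast
    from a have a': "a = b * (b * c)" by (simp add: power2_eq_square mult.assoc)
    from b have "\<not> b * c dvd 1" by (meson dvd_mult_left)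
    then obtain d where "d \<in> Sqf" "d dvd b" "\<not> d dvd 1"
      using step.IH[OF a' _ b] by blast
    moreover from a' have "b dvd a" by simp
    ultimately show ?thesis by (blast intro: dvd_trans)
  qed
qed

lemma cond1_mono: "S \<subseteq> T \<Longrightarrow> cond1 S (a::'a::comm_monoid_mult) \<Longrightarrow> cond1 T a"
  unfolding cond1_def by blast

lemma cond2_mono: "S \<subseteq> T \<Longrightarrow> cond2 S (a::'a::comm_monoid_mult) \<Longrightarrow> cond2 T a"
  unfolding cond2_def by blast

lemma cond4_mono: "S \<subseteq> T \<Longrightarrow> cond4 S (a::'a::comm_monoid_mult) \<Longrightarrow> cond4 T a"
  unfolding cond4_def by blast

lemma cond5_mono: "S \<subseteq> T \<Longrightarrow> cond5 S (a::'a::comm_monoid_mult) \<Longrightarrow> cond5 T a"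
  unfolding cond5_def by blast

lemma cond0_prod_list:
  assumes "xs \<noteq> []" and "set xs \<subseteq> S"
  shows "cond0 S (prod_list xs)"
proof -
  define s where "s i = xs ! (i - 1)" for i
  have "prod_list xs = (\<Prod>i=1..length xs. s i)"
    by (simp add: s_def prod.list_conv_set_nth prod.atLeast1_atMost_eq atLeast0LessThan)
  moreover have "\<forall>i\<in>{1..length xs}. s i \<in> S"
    by (auto simp: s_def intro!: subsetD[OF assms(2)] nth_mem)
  moreover have "length xs \<ge> 1" using assms(1) by (simp add: Suc_le_eq)
  ultimately show ?thesis unfolding cond0_def by blast
qed

lemma cond1_imp_cond0:
  assumes "cond1 S (a::'a::comm_monoid_mult)"
  shows "cond0 S a"
proof -
  obtain n s where n: "n \<ge> 1" and sS: "\<forall>i\<in>{1..n}. s i \<in> S" and a: "a = (\<Prod>i=1..n. s i ^ i)"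
    using assms unfolding cond1_def by blast
  define xs where "xs = concat (map (\<lambda>i. replicate i (s i)) [1..<Suc n])"
  have "prod_list (map f [1..<Suc n]) = prod f {1..n}" for f :: "nat \<Rightarrow> 'a"
    unfolding prod.distinct_set_conv_list[OF distinct_upt, symmetric] set_upt
      atLeastLessThanSuc_atLeastAtMost ..
  then have "prod_list xs = (\<Prod>i=1..n. s i ^ i)"
    by (simp add: xs_def prod_list_concat comp_def)
  moreover have "xs \<noteq> []" using n by (force simp: xs_def)
  moreover have "set xs \<subseteq> S" using sS by (auto simp: xs_def)
  ultimately show ?thesis using a cond0_prod_list by metis
qed

lemma chain_dvd_last:
  fixes s :: "nat \<Rightarrow> 'a::comm_monoid_mult"
  assumes "\<forall>i. 1 \<le> i \<and> i < n \<longrightarrow> s i dvd s (Suc i)" and "1 \<le> i" and "i \<le> n"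
  shows "s i dvd s n"
  using assms(3)
proof (induction n rule: dec_induct)
  case (step m)
  have "s m dvd s (Suc m)" using assms(1,2) step.hyps by auto
  with step.IH show ?case by (rule dvd_trans)
qed simp

lemma cond2_imp_cond5:
  assumes "cond2 S (a::'a::comm_monoid_mult)"
  shows "cond5 S a"
proof -
  obtain n s where n: "n \<ge> 1" and sS: "\<forall>i\<in>{1..n}. s i \<in> S"
    and chain: "\<forall>i. 1 \<le> i \<and> i < n \<longrightarrow> s i dvd s (Suc i)" and a: "a = (\<Prod>i=1..n. s i)"
    using assms unfolding cond2_def by blast
  then obtain m where m: "n = Suc m" by (cases n) auto
  have "a = (\<Prod>i=1..m. s i) * s n" using a m by (simp add: prod.cl_ivl_Suc)
  moreover have "a dvd s n ^ n"
  proof -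
    have "(\<Prod>i=1..n. s i) dvd (\<Prod>i=1..n. s n)"
      by (rule prod_dvd_prod) (use chain_dvd_last[OF chain] in auto)
    then show ?thesis using a by simp
  qed
  moreover have "s n \<in> S" using sS n by simp
  ultimately show ?thesis unfolding cond5_def using n by blast
qed

lemma cond3_imp_cond6:
  assumes "cond3 S (a::'a::comm_monoid_mult)"
  shows "cond6 S a"
proof -
  obtain n s where sS: "\<forall>i\<in>{0..n}. s i \<in> S" and a: "a = (\<Prod>i=0..n. s i ^ 2 ^ i)"
    using assms unfolding cond3_def by blast
  have "s 0 \<in> S" using sS by simp
  moreover have "\<exists>b. a = b\<^sup>2 * s 0"
  proof (cases n)
    case 0
    then show ?thesis using a by (intro exI[of _ 1]) simp
  next
    case (Suc m)
    then show ?thesis using a prod_power2_Suc_shift[of s m] by blast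
  qed
  ultimately show ?thesis unfolding cond6_def by blast
qed

lemma cond3_square_mult:
  assumes "cond3 S (b::'a::comm_monoid_mult)" and "c \<in> S"
  shows "cond3 S (b\<^sup>2 * c)"
proof -
  obtain n t where tS: "\<forall>i\<in>{0..n}. t i \<in> S" and b: "b = (\<Prod>i=0..n. t i ^ 2 ^ i)"
    using assms(1) unfolding cond3_def by blast
  have "b\<^sup>2 * c = (\<Prod>i=0..Suc n. case_nat c t i ^ 2 ^ i)"
    using prod_power2_Suc_shift[of "case_nat c t" n] by (simp add: b)
  moreover have "\<forall>i\<in>{0..Suc n}. case_nat c t i \<in> S"
    using tS assms(2) by (auto split: nat.split)
  ultimately show ?thesis unfolding cond3_def by blast
qed

lemma cond5_Gpr_imp_cond5':
  assumes "cond5 Gpr (a::'a::comm_monoid_mult)"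
  shows "cond5' Gpr a"
proof -
  obtain b c k where c: "c \<in> Gpr" and a: "a = b * c" and k: "k \<ge> 1" and "a dvd c ^ k"
    using assms unfolding cond5_def by blast
  have "d dvd c" if "d \<in> Gpr" "d dvd a" for d
    using GprD[OF that(1) k] dvd_trans[OF that(2) \<open>a dvd c ^ k\<close>] .
  then show ?thesis unfolding cond5'_def using c a by blast
qed

lemma cond4_Gpr_imp_cond4':
  assumes "cond4 Gpr (a::'a::comm_monoid_mult)"
  shows "cond4' Gpr a"
proof -
  obtain b c d0 n where c: "c \<in> Gpr" and rp: "relprime b c" and a: "a = b * c"
    and "d0\<^sup>2 dvd b" and n: "n \<ge> 1" and "b dvd d0 ^ n"
    using assms unfolding cond4_def by blast
  have "d\<^sup>2 dvd b" if "d \<in> Gpr" "d dvd b" for d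
  proof -
    have "d dvd d0" using GprD[OF that(1) n] dvd_trans[OF that(2) \<open>b dvd d0 ^ n\<close>] .
    then have "d\<^sup>2 dvd d0\<^sup>2" by (rule dvd_power_same_comm_monoid)
    then show ?thesis using \<open>d0\<^sup>2 dvd b\<close> by (rule dvd_trans)
  qed
  then show ?thesis unfolding cond4'_def using c rp a by blast
qed

lemma cond6_imp_cond3:
  assumes "cancellative TYPE('a::comm_monoid_mult)" and "ACCP TYPE('a)"
    and dvd_closed: "\<And>x y::'a. x \<in> S \<Longrightarrow> y dvd x \<Longrightarrow> y \<in> S"
    and cond6: "\<forall>x. cond6 S x"
  shows "cond3 S (a::'a)"
proof (induction a rule: ACCP_nonunit_factor_induct[OF assms(1,2), case_names step])
  case (step a)
  obtain b c where c: "c \<in> S" and a: "a = b\<^sup>2 * c"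
    using cond6 unfolding cond6_def by blast
  show ?case
  proof (cases "b dvd 1")
    case True
    then have "a dvd c" unfolding a by (rule unit_power2_mult_dvd)
    then have "a \<in> S" by (rule dvd_closed[OF c])
    then show ?thesis unfolding cond3_def by (intro exI[of _ 0] exI[of _ "\<lambda>_. a"]) simp
  next
    case False
    have "a = b * (b * c)" using a by (simp add: power2_eq_square mult.assoc)
    moreover have "\<not> b * c dvd 1" using False by (meson dvd_mult_left)
    ultimately have "cond3 S b" by (rule step.IH)
    then show ?thesis using cond3_square_mult c a by blast
  qed
qed

lemma cond6_imp_cond5:
  assumes "cancellative TYPE('a::comm_monoid_mult)" and "ACCP TYPE('a)"
    and cond6: "\<forall>x. cond6 S x"
  shows "cond5 S (a::'a)"
proof (induction a rule: ACCP_nonunit_factor_induct[OF assms(1,2), case_names step])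
  case (step a)
  obtain b c where c: "c \<in> S" and a: "a = b\<^sup>2 * c"
    using cond6 unfolding cond6_def by blast
  show ?case
  proof (cases "b dvd 1")
    case True
    then have "a dvd c" unfolding a by (rule unit_power2_mult_dvd)
    then have "a dvd c ^ 1" by simp
    then show ?thesis unfolding cond5_def using a c by blast
  next
    case False
    have a': "a = (b * c) * b" using a by (simp add: power2_eq_square ac_simps)
    then have "cond5 S (b * c)" by (rule step.IH[OF _ False])
    then obtain B C m where C: "C \<in> S" and bc: "b * c = B * C" and m: "m \<ge> 1"
      and bc_dvd: "b * c dvd C ^ m" unfolding cond5_def by blast
    have "b dvd C ^ m" using bc_dvd by (rule dvd_mult_left)
    with bc_dvd have "a dvd C ^ m * C ^ m" unfolding a' by (rule mult_dvd_mono)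
    then have "a dvd C ^ (m + m)" by (simp add: power_add)
    moreover have "a = (b * B) * C" using a' bc by (simp add: ac_simps)
    moreover have "m + m \<ge> 1" using m by simp
    ultimately show ?thesis unfolding cond5_def using C by blast
  qed
qed

lemma cond2_mult:
  assumes "cond2 S (b::'a::comm_monoid_mult)" and "c \<in> S"
    and "\<And>d. d \<in> S \<Longrightarrow> d dvd b \<Longrightarrow> d dvd c"
  shows "cond2 S (b * c)"
proof -
  obtain n s where n: "n \<ge> 1" and sS: "\<forall>i\<in>{1..n}. s i \<in> S"
    and chain: "\<forall>i. 1 \<le> i \<and> i < n \<longrightarrow> s i dvd s (Suc i)" and b: "b = (\<Prod>i=1..n. s i)"
    using assms(1) unfolding cond2_def by blast
  define s' where "s' = s(Suc n := c)"
  have "(\<Prod>i=1..n. s' i) = b" unfolding b by (rule prod.cong) (auto simp: s'_def)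
  then have bc: "b * c = (\<Prod>i=1..Suc n. s' i)" by (simp add: s'_def)
  have "s n dvd c"
  proof (rule assms(3))
    show "s n \<in> S" using sS n by simp
    show "s n dvd b" unfolding b using prod_dvd_prod_subset[of "{1..n}" "{n}" s] n by simp
  qed
  have "s' i dvd s' (Suc i)" if "1 \<le> i" "i < Suc n" for i
  proof (cases "i = n")
    case True
    then show ?thesis using \<open>s n dvd c\<close> by (simp add: s'_def)
  next
    case False
    then show ?thesis using chain that by (simp add: s'_def)
  qed
  moreover have "\<forall>i\<in>{1..Suc n}. s' i \<in> S" using sS assms(2) by (auto simp: s'_def)
  ultimately show ?thesis
    using bc unfolding cond2_def by (intro exI[of _ "Suc n"] exI[of _ s'] conjI) simp_all
qed

lemma cond2_if_cond5':
  assumes "cancellative TYPE('a::comm_monoid_mult)" and "ACCP TYPE('a)"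
    and units: "\<And>u::'a. u dvd 1 \<Longrightarrow> u \<in> S"
    and nonunit_dvd: "\<And>x::'a. \<not> x dvd 1 \<Longrightarrow> \<exists>d\<in>S. d dvd x \<and> \<not> d dvd 1"
    and cond5': "\<forall>x. cond5' S x"
  shows "cond2 S (a::'a)"
proof (induction a rule: ACCP_nonunit_factor_induct[OF assms(1,2), case_names step])
  case (step a)
  from cond5' have "cond5' S a" ..
  then obtain b c where c: "c \<in> S" and a: "a = b * c" and absorb: "\<forall>d\<in>S. d dvd a \<longrightarrow> d dvd c"
    unfolding cond5'_def by blast
  show ?case
  proof (cases "c dvd 1")
    case True
    have "a dvd 1"
    proof (rule ccontr)
      assume "\<not> a dvd 1"
      then obtain d where "d \<in> S" "d dvd a" "\<not> d dvd 1" using nonunit_dvd by blast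
      then have "d dvd c" using absorb by blast
      then show False using \<open>c dvd 1\<close> \<open>\<not> d dvd 1\<close> dvd_trans by blast
    qed
    then have "a \<in> S" by (rule units)
    then show ?thesis unfolding cond2_def by (intro exI[of _ 1] conjI exI[of _ "\<lambda>_. a"]) simp_all
  next
    case False
    have "d dvd c" if "d \<in> S" "d dvd b" for d
    proof -
      have "d dvd a" using \<open>d dvd b\<close> unfolding a by (rule dvd_mult2)
      then show ?thesis using absorb \<open>d \<in> S\<close> by blast
    qed
    with step.IH[OF a False] c have "cond2 S (b * c)" by (rule cond2_mult)
    then show ?thesis unfolding a .
  qed
qed

lemma cond5_imp_nonunit_dvd:
  assumes "cond5 S (a::'a::comm_monoid_mult)" and "\<not> a dvd 1"
  shows "\<exists>d\<in>S. d dvd a \<and> \<not> d dvd 1"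
proof -
  obtain b c k where "c \<in> S" and a: "a = b * c" and "a dvd c ^ k"
    using assms(1) unfolding cond5_def by blast
  have "\<not> c dvd 1"
  proof
    assume "c dvd 1"
    then have "c ^ k dvd 1" using dvd_power_same_comm_monoid[of c 1 k] by simp
    then show False using \<open>a dvd c ^ k\<close> assms(2) dvd_trans by blast
  qed
  moreover have "c dvd a" unfolding a by simp
  ultimately show ?thesis using \<open>c \<in> S\<close> by blast
qed

lemma cond5_Gpr_imp_cond2:
  assumes "cancellative TYPE('a::comm_monoid_mult)" and "ACCP TYPE('a)"
    and "\<forall>x::'a. cond5 Gpr x"
  shows "cond2 Gpr (a::'a)"
proof (rule cond2_if_cond5'[OF assms(1,2) unit_in_Gpr])
  show "\<exists>d\<in>Gpr. d dvd x \<and> \<not> d dvd 1" if "\<not> x dvd 1" for x :: 'a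
    using cond5_imp_nonunit_dvd assms(3) that by blast
  show "\<forall>x::'a. cond5' Gpr x" using cond5_Gpr_imp_cond5' assms(3) by blast
qed

lemma cond5'_Sqf_imp_cond2:
  assumes "cancellative TYPE('a::comm_monoid_mult)" and "ACCP TYPE('a)"
    and "\<forall>x::'a. cond5' Sqf x"
  shows "cond2 Sqf (a::'a)"
  using cond2_if_cond5'[OF assms(1,2) unit_in_Sqf nonunit_imp_nonunit_Sqf_dvd[OF assms(1,2)] assms(3)] .

text \<open>The product \<open>s\<^sub>1 \<cdots> s\<^sub>n\<close> plays the role of the radical of
  \<open>a = s\<^sub>1 s\<^sub>2\<^sup>2 \<cdots> s\<^sub>n\<^sup>n\<close>.\<close>
definition rad_factorization :: "'a::comm_monoid_mult \<Rightarrow> bool" where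
  "rad_factorization a \<longleftrightarrow>
    (\<exists>n\<ge>1. \<exists>s::nat \<Rightarrow> 'a. a = (\<Prod>i=1..n. s i ^ i) \<and> (\<Prod>i=1..n. s i) \<in> Gpr)"

lemma rad_factorization_mult:
  assumes "rad_factorization (b::'a::comm_monoid_mult)" and "c \<in> Gpr"
    and "b dvd c ^ k" and "k \<ge> 1"
  shows "rad_factorization (b * c)"
proof -
  obtain m t where m: "m \<ge> 1" and b: "b = (\<Prod>i=1..m. t i ^ i)" and "(\<Prod>i=1..m. t i) \<in> Gpr"
    using assms(1) unfolding rad_factorization_def by blast
  define r where "r = (\<Prod>i=1..m. t i)"
  have "r \<in> Gpr" unfolding r_def by fact
  have "r dvd b" unfolding r_def b
  proof (rule prod_dvd_prod)
    fix i assume "i \<in> {1..m}"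
    then show "t i dvd t i ^ i" using le_imp_power_dvd_comm_monoid[of 1 i "t i"] by simp
  qed
  then have "r dvd c" using GprD[of r k c] \<open>r \<in> Gpr\<close> assms(3,4) dvd_trans by blast
  then obtain u where c: "c = r * u" by (elim dvdE)
  define s where "s i = (if i = 1 then u else t (i - 1))" for i
  have s_Suc: "(\<Prod>i=1..m. f i (s (Suc i))) = (\<Prod>i=1..m. f i (t i))" for f :: "nat \<Rightarrow> 'a \<Rightarrow> 'a"
    by (rule prod.cong) (auto simp: s_def)
  have "(\<Prod>i=1..Suc m. s i ^ i) = s 1 ^ 1 * (\<Prod>i=1..m. s (Suc i) ^ Suc i)"
    by (rule prod_atLeast1_Suc_shift)
  also have "\<dots> = u * (\<Prod>i=1..m. t i * t i ^ i)"
    unfolding s_Suc[of "\<lambda>i x. x ^ Suc i"] by (simp add: s_def)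
  also have "\<dots> = b * c" by (simp add: b c r_def prod.distrib ac_simps)
  finally have "b * c = (\<Prod>i=1..Suc m. s i ^ i)" ..
  moreover have "(\<Prod>i=1..Suc m. s i) = c"
    unfolding prod_atLeast1_Suc_shift s_Suc[of "\<lambda>_ x. x"] by (simp add: s_def c r_def ac_simps)
  ultimately show ?thesis
    using assms(2) unfolding rad_factorization_def by (intro exI[of _ "Suc m"] conjI exI[of _ s]) simp_all
qed

lemma rad_factorization_if_cond5:
  assumes "cancellative TYPE('a::comm_monoid_mult)" and "ACCP TYPE('a)"
    and cond5: "\<forall>x::'a. cond5 Gpr x"
  shows "rad_factorization (a::'a)"
proof (induction a rule: ACCP_nonunit_factor_induct[OF assms(1,2), case_names step])
  case (step a)
  from cond5 have "cond5 Gpr a" ..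
  then obtain b c k where c: "c \<in> Gpr" and a: "a = b * c" and k: "k \<ge> 1" and "a dvd c ^ k"
    unfolding cond5_def by blast
  show ?case
  proof (cases "c dvd 1")
    case True
    then have "c ^ k dvd 1" using dvd_power_same_comm_monoid[of c 1 k] by simp
    then have "a \<in> Gpr" using \<open>a dvd c ^ k\<close> unit_in_Gpr dvd_trans by blast
    then show ?thesis
      unfolding rad_factorization_def by (intro exI[of _ 1] conjI exI[of _ "\<lambda>_. a"]) simp_all
  next
    case False
    have "b dvd c ^ k" using \<open>a dvd c ^ k\<close> unfolding a by (rule dvd_mult_left)
    with step.IH[OF a False] c show ?thesis unfolding a using k by (rule rad_factorization_mult)
  qed
qed

lemma rad_factorization_imp_cond1:
  assumes "cancellative TYPE('a::comm_monoid_mult)" and "rad_factorization (a::'a)"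
  shows "cond1 Gpr a"
proof -
  obtain n s where n: "n \<ge> 1" and a: "a = (\<Prod>i=1..n. s i ^ i)" and rad: "(\<Prod>i=1..n. s i) \<in> Gpr"
    using assms(2) unfolding rad_factorization_def by blast
  have sub: "prod s I \<in> Gpr" if "I \<subseteq> {1..n}" for I
  proof (rule Gpr_dvd_closed[OF assms(1) rad])
    show "prod s I dvd (\<Prod>i=1..n. s i)" using that by (intro prod_dvd_prod_subset) simp_all
  qed
  have "s i \<in> Gpr" if "i \<in> {1..n}" for i
    using sub[of "{i}"] that by simp
  moreover have "relprime (s i) (s j)" if "i \<in> {1..n}" "j \<in> {1..n}" "i \<noteq> j" for i j
  proof -
    have "s i * s j \<in> Gpr" using sub[of "{i, j}"] that by simp
    then show ?thesis by (rule relprime_if_mult_Gpr[OF assms(1)])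
  qed
  ultimately show ?thesis unfolding cond1_def using n a by blast
qed

lemma rad_factorization_imp_cond4:
  assumes "cancellative TYPE('a::comm_monoid_mult)" and "rad_factorization (a::'a)"
  shows "cond4 Gpr a"
proof -
  obtain n s where n: "n \<ge> 1" and a: "a = (\<Prod>i=1..n. s i ^ i)" and rad: "(\<Prod>i=1..n. s i) \<in> Gpr"
    using assms(2) unfolding rad_factorization_def by blast
  define b where "b = (\<Prod>i=2..n. s i ^ i)"
  define d where "d = (\<Prod>i=2..n. s i)"
  have "a = b * s 1"
    unfolding a b_def prod.atLeast_Suc_atMost[OF n] by (simp add: numeral_2_eq_2 ac_simps)
  have ds1: "d * s 1 \<in> Gpr"
    using rad unfolding d_def prod.atLeast_Suc_atMost[OF n] by (simp add: numeral_2_eq_2 ac_simps)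
  have d: "d \<in> Gpr" by (rule Gpr_dvd_closed[OF assms(1) ds1]) simp
  have s1: "s 1 \<in> Gpr" by (rule Gpr_dvd_closed[OF assms(1) ds1]) simp
  have "relprime d (s 1)" by (rule relprime_if_mult_Gpr[OF assms(1) ds1])
  have "d\<^sup>2 dvd b"
  proof -
    have "d\<^sup>2 = (\<Prod>i=2..n. s i ^ 2)" unfolding d_def by (rule prod_power_distrib_comm_monoid)
    also have "\<dots> dvd b" unfolding b_def
      by (rule prod_dvd_prod) (simp add: le_imp_power_dvd_comm_monoid)
    finally show ?thesis .
  qed
  have "b dvd d ^ n"
  proof -
    have "b dvd (\<Prod>i=2..n. s i ^ n)" unfolding b_def
      by (rule prod_dvd_prod) (simp add: le_imp_power_dvd_comm_monoid)
    also have "\<dots> = d ^ n" unfolding d_def by (rule prod_power_distrib_comm_monoid[symmetric])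
    finally show ?thesis .
  qed
  have "relprime b (s 1)"
    unfolding relprime_def unitH_iff_dvd_one
  proof (intro allI impI)
    fix e assume e: "e dvd b \<and> e dvd s 1"
    then have "e \<in> Gpr" using Gpr_dvd_closed[OF assms(1) s1] by blast
    moreover have "e dvd d ^ n" using e \<open>b dvd d ^ n\<close> dvd_trans by blast
    ultimately have "e dvd d" using GprD n by blast
    then show "e dvd 1" using \<open>relprime d (s 1)\<close> e unfolding relprime_def unitH_iff_dvd_one by blast
  qed
  then show ?thesis unfolding cond4_def
    using s1 \<open>a = b * s 1\<close> d \<open>d\<^sup>2 dvd b\<close> \<open>b dvd d ^ n\<close> n by blast
qed

lemma rad_factorization_imp_cond6:
  assumes "cancellative TYPE('a::comm_monoid_mult)" and "rad_factorization (a::'a)"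
  shows "cond6 Gpr a"
proof -
  obtain n s where a: "a = (\<Prod>i=1..n. s i ^ i)" and rad: "(\<Prod>i=1..n. s i) \<in> Gpr"
    using assms(2) unfolding rad_factorization_def by blast
  have "s i ^ i = (s i ^ (i div 2))\<^sup>2 * s i ^ (i mod 2)" for i
    by (metis div_mult_mod_eq power_add power_mult)
  then have "a = (\<Prod>i=1..n. (s i ^ (i div 2))\<^sup>2 * s i ^ (i mod 2))"
    unfolding a by (intro prod.cong) simp_all
  also have "\<dots> = (\<Prod>i=1..n. s i ^ (i div 2))\<^sup>2 * (\<Prod>i=1..n. s i ^ (i mod 2))"
    by (simp only: prod.distrib prod_power_distrib_comm_monoid)
  finally have "a = (\<Prod>i=1..n. s i ^ (i div 2))\<^sup>2 * (\<Prod>i=1..n. s i ^ (i mod 2))" .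
  moreover have "(\<Prod>i=1..n. s i ^ (i mod 2)) \<in> Gpr"
  proof (rule Gpr_dvd_closed[OF assms(1) rad], rule prod_dvd_prod)
    fix i :: nat
    have "i mod 2 = 0 \<or> i mod 2 = 1" by arith
    then show "s i ^ (i mod 2) dvd s i" by auto
  qed
  ultimately show ?thesis unfolding cond6_def by blast
qed

theorem proposition4p6:
  assumes "cancellative TYPE('a::comm_monoid_mult)"
    and "ACCP TYPE('a)"
  defines "R \<equiv> (Gpr :: 'a set)" and "Q \<equiv> (Sqf :: 'a set)"
  shows "((\<forall>a. cond1 R a) \<longrightarrow> (\<forall>a. cond0 R a))
    \<and> ((\<forall>a. cond2 R a) \<longrightarrow> (\<forall>a. cond1 R a))
    \<and> ((\<forall>a. cond2 R a) \<longleftrightarrow> (\<forall>a. cond3 R a))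
    \<and> ((\<forall>a. cond3 R a) \<longleftrightarrow> (\<forall>a. cond6 R a))
    \<and> ((\<forall>a. cond6 R a) \<longleftrightarrow> (\<forall>a. cond5 R a))
    \<and> ((\<forall>a. cond5 R a) \<longrightarrow> (\<forall>a. cond4 R a))
    \<and> ((\<forall>a. cond5 R a) \<longrightarrow> (\<forall>a. cond5' R a))
    \<and> ((\<forall>a. cond4 R a) \<longrightarrow> (\<forall>a. cond4' R a))
    \<and> ((\<forall>a. cond1 R a) \<longrightarrow> (\<forall>a. cond1 Q a))
    \<and> ((\<forall>a. cond2 R a) \<longrightarrow> (\<forall>a. cond2 Q a))
    \<and> ((\<forall>a. cond5 R a) \<longrightarrow> (\<forall>a. cond5 Q a))
    \<and> ((\<forall>a. cond4 R a) \<longrightarrow> (\<forall>a. cond4 Q a))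
    \<and> ((\<forall>a. cond2 Q a) \<longrightarrow> (\<forall>a. cond5 Q a))
    \<and> ((\<forall>a. cond5' Q a) \<longrightarrow> (\<forall>a. cond2 Q a))"
proof -
  note cancel = assms(1) and accp = assms(2)
  have RQ: "R \<subseteq> Q" unfolding R_def Q_def by (rule Gpr_subset_Sqf[OF cancel])
  have "rad_factorization a" if "\<forall>a. cond5 R a" for a :: 'a
    using that unfolding R_def by (rule rad_factorization_if_cond5[OF cancel accp])
  then have from_rad: "(\<forall>a. cond5 R a) \<Longrightarrow> \<forall>a. cond1 R a \<and> cond4 R a \<and> cond6 R a"
    unfolding R_def using rad_factorization_imp_cond1[OF cancel]
      rad_factorization_imp_cond4[OF cancel] rad_factorization_imp_cond6[OF cancel] by blast
  have "(\<forall>a. cond2 R a) \<Longrightarrow> \<forall>a. cond5 R a" using cond2_imp_cond5 by blast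
  moreover have "(\<forall>a. cond5 R a) \<Longrightarrow> \<forall>a. cond2 R a"
    unfolding R_def using cond5_Gpr_imp_cond2[OF cancel accp] by blast
  moreover have "(\<forall>a. cond3 R a) \<Longrightarrow> \<forall>a. cond6 R a" using cond3_imp_cond6 by blast
  moreover have "(\<forall>a. cond6 R a) \<Longrightarrow> \<forall>a. cond3 R a"
    unfolding R_def using cond6_imp_cond3[OF cancel accp] Gpr_dvd_closed[OF cancel] by metis
  moreover have "(\<forall>a. cond6 R a) \<Longrightarrow> \<forall>a. cond5 R a" using cond6_imp_cond5[OF cancel accp] by blast
  moreover have
    "(\<forall>a. cond1 R a) \<Longrightarrow> \<forall>a. cond0 R a" "(\<forall>a. cond5 R a) \<Longrightarrow> \<forall>a. cond5' R a"
    "(\<forall>a. cond4 R a) \<Longrightarrow> \<forall>a. cond4' R a"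
    unfolding R_def using cond1_imp_cond0 cond5_Gpr_imp_cond5' cond4_Gpr_imp_cond4' by blast+
  moreover have
    "(\<forall>a. cond1 R a) \<Longrightarrow> \<forall>a. cond1 Q a" "(\<forall>a. cond2 R a) \<Longrightarrow> \<forall>a. cond2 Q a"
    "(\<forall>a. cond4 R a) \<Longrightarrow> \<forall>a. cond4 Q a" "(\<forall>a. cond5 R a) \<Longrightarrow> \<forall>a. cond5 Q a"
    using cond1_mono[OF RQ] cond2_mono[OF RQ] cond4_mono[OF RQ] cond5_mono[OF RQ] by blast+
  moreover have
    "(\<forall>a. cond2 Q a) \<Longrightarrow> \<forall>a. cond5 Q a" "(\<forall>a. cond5' Q a) \<Longrightarrow> \<forall>a. cond2 Q a"
    unfolding Q_def using cond2_imp_cond5 cond5'_Sqf_imp_cond2[OF cancel accp] by blast+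
  ultimately show ?thesis using from_rad by blast
qed

end
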